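(* Let $\mathbf X$ be a $d$-dimensional continuous random vector with identical marginals. If $\mathbf X\in\mathrm{IC}^d$, then its correlation matrix coincides with its tail-dependence matrix, and also with its $\kappa_g$-matrix for every $g$ admissible for the standard uniform distribution.
   Context: For non-degenerate finite-variance $X,Y$, $(X,Y)$ has invariant correlation $r$ if $\mathrm{Corr}(X,Y)=\mathrm{Corr}(g(X),g(Y))=r$ for every measurable $g$ with $g(X),g(Y)$ non-degenerate of finite variance; $\mathbf X\in\mathrm{IC}^d$ means there is a matrix $R=(r_{ij})$ with $(X_i,X_j)$ having invariant correlation $r_{ij}$ for all $i,j$. For continuous $(X_i,X_j)$ with marginals $F_i,F_j$, the lower tail-dependence coefficient is $\lambda_{ij}=\lim_{u\downarrow0}\mathbb P(F_i(X_i)\le u,F_j(X_j)\le u)/u$; the tail-dependence matrix is $(\lambda_{ij})$. For $g:\mathbb R\to\mathbb R$, $\kappa_g(X_i,X_j)=\mathrm{Corr}(g(F_i(X_i)),g(F_j(X_j)))$ and the $\kappa_g$-matrix is $(\kappa_g(X_i,X_j))_{d\times d}$. $g$ is admissible for the standard uniform distribution if it is measurable and $g(U)$ is non-degenerate with finite variance for $U$ standard uniform. *)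

theory Defs
  imports "HOL-Probability.Probability"
begin

definition cov :: "'a measure \<Rightarrow> ('a \<Rightarrow> real) \<Rightarrow> ('a \<Rightarrow> real) \<Rightarrow> real" where
  "cov M X Y = (\<integral>\<omega>. (X \<omega> - (\<integral>\<eta>. X \<eta> \<partial>M)) * (Y \<omega> - (\<integral>\<eta>. Y \<eta> \<partial>M)) \<partial>M)"

definition var :: "'a measure \<Rightarrow> ('a \<Rightarrow> real) \<Rightarrow> real" where
  "var M X = cov M X X"

definition corr :: "'a measure \<Rightarrow> ('a \<Rightarrow> real) \<Rightarrow> ('a \<Rightarrow> real) \<Rightarrow> real" where
  "corr M X Y = cov M X Y / sqrt (var M X * var M Y)"

definition nondeg_fin_var :: "'a measure \<Rightarrow> ('a \<Rightarrow> real) \<Rightarrow> bool" where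
  "nondeg_fin_var M X \<longleftrightarrow>
     X \<in> borel_measurable M \<and> integrable M (\<lambda>\<omega>. (X \<omega>)\<^sup>2) \<and>
     \<not> (\<exists>c. AE \<omega> in M. X \<omega> = c)"

definition invariant_corr :: "'a measure \<Rightarrow> ('a \<Rightarrow> real) \<Rightarrow> ('a \<Rightarrow> real) \<Rightarrow> real \<Rightarrow> bool" where
  "invariant_corr M X Y r \<longleftrightarrow>
     nondeg_fin_var M X \<and> nondeg_fin_var M Y \<and> corr M X Y = r \<and>
     (\<forall>g. g \<in> borel_measurable borel \<longrightarrow>
          nondeg_fin_var M (g \<circ> X) \<longrightarrow> nondeg_fin_var M (g \<circ> Y) \<longrightarrow>
          corr M (g \<circ> X) (g \<circ> Y) = r)"

definition IC :: "'a measure \<Rightarrow> nat \<Rightarrow> (nat \<Rightarrow> 'a \<Rightarrow> real) \<Rightarrow> bool" where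
  "IC M d X \<longleftrightarrow> (\<exists>R :: nat \<Rightarrow> nat \<Rightarrow> real.
     \<forall>i<d. \<forall>j<d. invariant_corr M (X i) (X j) (R i j))"

definition marg_cdf :: "'a measure \<Rightarrow> ('a \<Rightarrow> real) \<Rightarrow> real \<Rightarrow> real" where
  "marg_cdf M X = cdf (distr M borel X)"

definition lower_tail_dep_is :: "'a measure \<Rightarrow> ('a \<Rightarrow> real) \<Rightarrow> ('a \<Rightarrow> real) \<Rightarrow> real \<Rightarrow> bool" where
  "lower_tail_dep_is M X Y l \<longleftrightarrow>
     ((\<lambda>u. measure M {\<omega> \<in> space M. marg_cdf M X (X \<omega>) \<le> u \<and> marg_cdf M Y (Y \<omega>) \<le> u} / u)
        \<longlongrightarrow> l) (at_right 0)"

definition kappa :: "(real \<Rightarrow> real) \<Rightarrow> 'a measure \<Rightarrow> ('a \<Rightarrow> real) \<Rightarrow> ('a \<Rightarrow> real) \<Rightarrow> real" where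
  "kappa g M X Y = corr M (\<lambda>\<omega>. g (marg_cdf M X (X \<omega>))) (\<lambda>\<omega>. g (marg_cdf M Y (Y \<omega>)))"

definition admissible_unif :: "(real \<Rightarrow> real) \<Rightarrow> bool" where
  "admissible_unif g \<longleftrightarrow> g \<in> borel_measurable borel \<and>
     nondeg_fin_var (uniform_measure lborel {0..1}) g"

end

theory Submission
  imports Defs
begin

text \<open>
  Since the marginals are continuous and identical with common distribution function F, the
  probability integral transform makes F(X_i) standard uniform for every i. Invariance of the
  correlation r_ij under the indicator g of {F \<le> u} says that the indicators of the events
  {F(X_i) \<le> u} and {F(X_j) \<le> u}, both of probability u, have correlation r_ij; hence
  P(F(X_i) \<le> u, F(X_j) \<le> u) = r_ij u (1 - u) + u^2, and dividing by u and letting u \<down> 0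
  gives the tail-dependence coefficient r_ij. For admissible g, invariance under g \<circ> F gives
  \<kappa>_g = r_ij directly, the hypotheses on g \<circ> F \<circ> X_i being those on g transported along
  the uniform law of F(X_i).
\<close>

lemma (in real_distribution) borel_measurable_cdf: "cdf M \<in> borel_measurable borel"
  by (intro borel_measurable_mono monoI cdf_nondecreasing)

lemma (in prob_space) borel_measurable_marg_cdf [measurable]:
  "Y \<in> borel_measurable M \<Longrightarrow> marg_cdf M Y \<in> borel_measurable borel"
  unfolding marg_cdf_def by (intro real_distribution.borel_measurable_cdf) simp

lemma (in real_distribution) continuous_cdf_sublevel_eq_atMost:
  assumes cont: "\<And>x. isCont (cdf M) x" and u: "0 < u" "u < 1"
  shows "\<exists>q. cdf M q = u \<and> {x. cdf M x \<le> u} = {..q}"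
proof -
  define S where "S = {x. cdf M x \<le> u}"
  have "eventually (\<lambda>x. cdf M x < u) at_bot"
    using cdf_lim_at_bot u by (simp add: order_tendsto_iff)
  then obtain a where "cdf M a < u" by (metis eventually_at_bot_linorder order_refl)
  then have "a \<in> S" by (simp add: S_def)
  then have "S \<noteq> {}" by blast
  have "eventually (\<lambda>x. u < cdf M x) at_top"
    using cdf_lim_at_top_prob u by (simp add: order_tendsto_iff)
  then obtain b where "\<And>x. b \<le> x \<Longrightarrow> u < cdf M x" by (auto simp: eventually_at_top_linorder)
  then have "bdd_above S" unfolding S_def bdd_above_def by (meson linorder_not_le mem_Collect_eq nle_le)
  have "closed S"
    unfolding S_def using cont by (intro closed_Collect_le continuous_at_imp_continuous_on) auto
  define q where "q = Sup S"
  have "q \<in> S" unfolding q_def by (rule closed_contains_Sup) fact+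
  have S_le_q: "x \<in> S \<Longrightarrow> x \<le> q" for x unfolding q_def using \<open>bdd_above S\<close> by (metis cSup_upper)
  have "cdf M q = u"
  proof (rule ccontr)
    assume "cdf M q \<noteq> u"
    with \<open>q \<in> S\<close> have "cdf M q < u" by (simp add: S_def)
    then have "eventually (\<lambda>x. cdf M x < u) (at q)"
      using cont[of q] unfolding isCont_def by (simp add: order_tendsto_iff)
    then obtain e where "e > 0" and e: "\<And>x. x \<noteq> q \<Longrightarrow> dist x q < e \<Longrightarrow> cdf M x < u"
      by (auto simp: eventually_at)
    then have "q + e/2 \<in> S" by (auto simp: S_def dist_real_def intro!: less_imp_le)
    with S_le_q \<open>e > 0\<close> show False by fastforce
  qed
  moreover have "S = {..q}"
    using S_le_q \<open>cdf M q = u\<close> cdf_nondecreasing by (auto simp: S_def intro: order_trans)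
  ultimately show ?thesis unfolding S_def by blast
qed

lemma (in real_distribution) measure_continuous_cdf_le:
  assumes cont: "\<And>x. isCont (cdf M) x" and u: "0 < u" "u < 1"
  shows "measure M {x. cdf M x \<le> u} = u"
  using continuous_cdf_sublevel_eq_atMost[OF assms] by (auto simp: cdf_def)

lemma (in real_distribution) distr_continuous_cdf_uniform:
  assumes cont: "\<And>x. isCont (cdf M) x"
  shows "distr M borel (cdf M) = uniform_measure lborel {0..1}"
proof (rule cdf_unique)
  show "real_distribution (distr M borel (cdf M))" using borel_measurable_cdf by simp
  show "real_distribution (uniform_measure lborel {0..1::real})"
    by (auto simp: real_distribution_def real_distribution_axioms_def intro!: prob_space_uniform_measure)
  have cdf_transform: "cdf (distr M borel (cdf M)) u = measure M {x. cdf M x \<le> u}" for u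
    using borel_measurable_cdf by (simp add: cdf_def measure_distr vimage_def)
  show "cdf (distr M borel (cdf M)) = cdf (uniform_measure lborel {0..1})"
  proof
    fix u :: real
    have cdf_uniform: "cdf (uniform_measure lborel {0..1::real}) u = measure lborel ({0..1} \<inter> {..u})"
      by (simp add: cdf_def)
    consider "u < 0" | "u = 0" | "0 < u \<and> u < 1" | "1 \<le> u" by linarith
    then show "cdf (distr M borel (cdf M)) u = cdf (uniform_measure lborel {0..1}) u"
    proof cases
      case 1
      have "u < cdf M x" for x using cdf_nonneg[of x] 1 by linarith
      then have "{x. cdf M x \<le> u} = {}" "{0..1} \<inter> {..u} = {}"
        using 1 by (auto simp: not_le)
      then show ?thesis unfolding cdf_transform cdf_uniform by simp
    next
      case 2
      have "measure M {x. cdf M x \<le> 0} \<le> e" if "e > 0" for e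
      proof -
        define v where "v = min e (1/2)"
        have "{x. cdf M x \<le> v} \<in> sets M"
          using borel_measurable_cdf by (simp add: sets_M pred_le_const)
        moreover have "{x. cdf M x \<le> 0} \<subseteq> {x. cdf M x \<le> v}"
          using \<open>e > 0\<close> by (auto simp: v_def)
        ultimately have "measure M {x. cdf M x \<le> 0} \<le> measure M {x. cdf M x \<le> v}"
          by (intro finite_measure_mono)
        also have "\<dots> = v" using \<open>e > 0\<close> by (intro measure_continuous_cdf_le cont) (auto simp: v_def)
        finally show ?thesis by (simp add: v_def)
      qed
      then have "measure M {x. cdf M x \<le> 0} \<le> 0" by (rule field_le_epsilon) simp
      then have "measure M {x. cdf M x \<le> 0} = 0" by (simp add: measure_le_0_iff)
      moreover have "{0..1} \<inter> {..0::real} = {0}" by auto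
      ultimately show ?thesis unfolding cdf_transform cdf_uniform unfolding 2 by simp
    next
      case 3
      then have "{0..1} \<inter> {..u} = {0..u}" by auto
      then show ?thesis unfolding cdf_transform cdf_uniform using 3 cont by (simp add: measure_continuous_cdf_le)
    next
      case 4
      have "cdf M x \<le> u" for x using cdf_bounded_prob[of x] 4 by linarith
      then have "{x. cdf M x \<le> u} = space M" "{0..1} \<inter> {..u} = {0..1}"
        using 4 by (auto simp: borel_UNIV)
      then show ?thesis unfolding cdf_transform cdf_uniform using prob_space by simp
    qed
  qed
qed

lemma (in prob_space) distr_marg_cdf_uniform:
  assumes Y: "Y \<in> borel_measurable M" and cont: "\<And>x. isCont (marg_cdf M Y) x"
  shows "distr M borel (\<lambda>\<omega>. marg_cdf M Y (Y \<omega>)) = uniform_measure lborel {0..1}"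
proof -
  interpret N: real_distribution "distr M borel Y" using Y by simp
  have "distr M borel (\<lambda>\<omega>. marg_cdf M Y (Y \<omega>)) = distr (distr M borel Y) borel (marg_cdf M Y)"
    using Y by (simp add: distr_distr comp_def)
  also have "\<dots> = uniform_measure lborel {0..1}"
    using cont unfolding marg_cdf_def by (rule N.distr_continuous_cdf_uniform)
  finally show ?thesis .
qed

lemma nondeg_fin_var_distr_iff:
  assumes Z: "Z \<in> borel_measurable M" and g: "g \<in> borel_measurable borel"
  shows "nondeg_fin_var M (\<lambda>\<omega>. g (Z \<omega>)) \<longleftrightarrow> nondeg_fin_var (distr M borel Z) g"
proof -
  have "(\<lambda>\<omega>. g (Z \<omega>)) \<in> borel_measurable M" using Z g by measurable
  moreover have "integrable (distr M borel Z) (\<lambda>x. (g x)\<^sup>2) \<longleftrightarrow> integrable M (\<lambda>\<omega>. (g (Z \<omega>))\<^sup>2)"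
    using Z g by (intro integrable_distr_eq) auto
  moreover have "(AE x in distr M borel Z. g x = c) \<longleftrightarrow> (AE \<omega> in M. g (Z \<omega>) = c)" for c
    using Z g by (intro AE_distr_iff) auto
  ultimately show ?thesis using g unfolding nondeg_fin_var_def by simp
qed

lemma nondeg_fin_var_cong:
  assumes "\<And>\<omega>. \<omega> \<in> space M \<Longrightarrow> f \<omega> = h \<omega>"
  shows "nondeg_fin_var M f \<longleftrightarrow> nondeg_fin_var M h"
proof -
  have "f \<in> borel_measurable M \<longleftrightarrow> h \<in> borel_measurable M"
    using assms by (rule measurable_cong)
  moreover have "integrable M (\<lambda>\<omega>. (f \<omega>)\<^sup>2) \<longleftrightarrow> integrable M (\<lambda>\<omega>. (h \<omega>)\<^sup>2)"
    using assms by (intro Bochner_Integration.integrable_cong) auto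
  moreover have "(AE \<omega> in M. f \<omega> = c) \<longleftrightarrow> (AE \<omega> in M. h \<omega> = c)" for c
    using assms by (intro AE_cong) auto
  ultimately show ?thesis unfolding nondeg_fin_var_def by simp
qed

lemma cov_cong:
  assumes "\<And>\<omega>. \<omega> \<in> space M \<Longrightarrow> f \<omega> = f' \<omega>" and "\<And>\<omega>. \<omega> \<in> space M \<Longrightarrow> h \<omega> = h' \<omega>"
  shows "cov M f h = cov M f' h'"
proof -
  have "(\<integral>\<eta>. f \<eta> \<partial>M) = (\<integral>\<eta>. f' \<eta> \<partial>M)" "(\<integral>\<eta>. h \<eta> \<partial>M) = (\<integral>\<eta>. h' \<eta> \<partial>M)"
    using assms by (auto intro: Bochner_Integration.integral_cong)
  then show ?thesis unfolding cov_def using assms by (auto intro: Bochner_Integration.integral_cong)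
qed

lemma corr_cong:
  assumes "\<And>\<omega>. \<omega> \<in> space M \<Longrightarrow> f \<omega> = f' \<omega>" and "\<And>\<omega>. \<omega> \<in> space M \<Longrightarrow> h \<omega> = h' \<omega>"
  shows "corr M f h = corr M f' h'"
  using cov_cong[of M f f' h h'] cov_cong[of M f f' f f'] cov_cong[of M h h' h h'] assms
  unfolding corr_def var_def by simp

lemma (in prob_space) cov_indicator:
  assumes A: "A \<in> events" and B: "B \<in> events"
  shows "cov M (indicator A) (indicator B) = prob (A \<inter> B) - prob A * prob B"
proof -
  have expectation: "expectation (indicator C) = prob C" if "C \<in> events" for C
    using that by (simp add: Int_absorb2 sets.sets_into_space)
  have integrable: "integrable M (indicator C :: _ \<Rightarrow> real)" if "C \<in> events" for C
    using that by (intro integrable_real_indicator) (auto simp: emeasure_eq_measure)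
  have "(indicator A x - prob A) * (indicator B x - prob B) =
      indicator (A \<inter> B) x - prob B * indicator A x - prob A * indicator B x + prob A * prob B" for x
    by (auto simp: indicator_def algebra_simps)
  then have "cov M (indicator A) (indicator B) =
      expectation (\<lambda>x. indicator (A \<inter> B) x - prob B * indicator A x - prob A * indicator B x
        + prob A * prob B)"
    unfolding cov_def expectation[OF A] expectation[OF B] by simp
  also have "\<dots> = prob (A \<inter> B) - prob A * prob B"
    using A B by (simp add: integrable expectation prob_space)
  finally show ?thesis .
qed

lemma (in prob_space) nondeg_fin_var_indicator:
  assumes A: "A \<in> events" and "0 < prob A" "prob A < 1"
  shows "nondeg_fin_var M (indicator A :: _ \<Rightarrow> real)"
proof -
  have "\<not> (AE \<omega> in M. indicator A \<omega> = (c :: real))" for c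
  proof
    assume const: "AE \<omega> in M. indicator A \<omega> = (c :: real)"
    show False
    proof (cases "c = 1")
      case True
      with const have "AE \<omega> in M. \<omega> \<in> A" by (auto elim!: eventually_mono simp: indicator_def split: if_splits)
      with A have "prob A = 1" by (simp add: AE_in_set_eq_1)
      with assms show False by simp
    next
      case False
      with const have "AE \<omega> in M. \<omega> \<in> space M - A" by (auto elim!: eventually_mono simp: indicator_def split: if_splits)
      with A have "prob (space M - A) = 1" by (subst AE_in_set_eq_1[symmetric]) auto
      with assms show False by (simp add: prob_compl)
    qed
  qed
  moreover have "(\<lambda>\<omega>. (indicator A \<omega> :: real)\<^sup>2) = indicator A" by (auto simp: indicator_def)
  ultimately show ?thesis
    using A unfolding nondeg_fin_var_def by (simp add: integrable_real_indicator emeasure_eq_measure)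
qed

lemma (in prob_space) corr_indicator_equal_prob:
  assumes A: "A \<in> events" and B: "B \<in> events" and "prob A = u" "prob B = u" and "0 \<le> u" "u \<le> 1"
  shows "corr M (indicator A) (indicator B) = (prob (A \<inter> B) - u\<^sup>2) / (u * (1 - u))"
proof -
  have "sqrt (u * (1 - u) * (u * (1 - u))) = u * (1 - u)"
    using assms by (simp add: real_sqrt_mult_self)
  then show ?thesis
    using assms unfolding corr_def var_def by (simp add: cov_indicator power2_eq_square algebra_simps)
qed

lemma (in prob_space) prob_marg_cdf_le:
  assumes Y: "Y \<in> borel_measurable M" and cont: "\<And>x. isCont (marg_cdf M Y) x"
    and "0 < u" "u < 1"
  shows "prob {\<omega> \<in> space M. marg_cdf M Y (Y \<omega>) \<le> u} = u"
proof -
  interpret N: real_distribution "distr M borel Y" using Y by simp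
  have "{x. marg_cdf M Y x \<le> u} \<in> sets borel" using Y by measurable
  then have "prob {\<omega> \<in> space M. marg_cdf M Y (Y \<omega>) \<le> u} = measure (distr M borel Y) {x. marg_cdf M Y x \<le> u}"
    using Y by (simp add: measure_distr vimage_def Int_def conj_commute)
  also have "\<dots> = u"
    using assms unfolding marg_cdf_def by (intro N.measure_continuous_cdf_le) auto
  finally show ?thesis .
qed

context prob_space
begin

context
  fixes Y Z :: "'a \<Rightarrow> real" and r :: real
  assumes Y[measurable]: "Y \<in> borel_measurable M" and Z[measurable]: "Z \<in> borel_measurable M"
    and identical: "distr M borel Y = distr M borel Z"
    and continuous: "\<And>x. isCont (marg_cdf M Y) x"
    and invariant: "invariant_corr M Y Z r"
begin

lemma marg_cdf_eq: "marg_cdf M Z = marg_cdf M Y"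
  unfolding marg_cdf_def identical ..

lemma invariant_corr_joint_sublevel:
  assumes u: "0 < u" "u < 1"
  shows "prob {\<omega> \<in> space M. marg_cdf M Y (Y \<omega>) \<le> u \<and> marg_cdf M Z (Z \<omega>) \<le> u}
    = r * (u * (1 - u)) + u\<^sup>2"
proof -
  define F where "F = marg_cdf M Y"
  have [measurable]: "F \<in> borel_measurable borel" unfolding F_def by measurable
  define g where "g = (indicator {x. F x \<le> u} :: real \<Rightarrow> real)"
  define A where "A = {\<omega> \<in> space M. F (Y \<omega>) \<le> u}"
  define B where "B = {\<omega> \<in> space M. F (Z \<omega>) \<le> u}"
  have events: "A \<in> events" "B \<in> events" unfolding A_def B_def by measurable
  have prob_sublevel: "prob A = u" "prob B = u"
    unfolding A_def B_def F_def using prob_marg_cdf_le[OF Y continuous u]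
      prob_marg_cdf_le[OF Z _ u] continuous by (simp_all add: marg_cdf_eq)
  have g_Y: "(g \<circ> Y) \<omega> = indicator A \<omega>" and g_Z: "(g \<circ> Z) \<omega> = indicator B \<omega>"
    if "\<omega> \<in> space M" for \<omega>
    using that by (simp_all add: g_def A_def B_def indicator_def)
  have "nondeg_fin_var M (g \<circ> Y) \<longleftrightarrow> nondeg_fin_var M (indicator A)"
    using g_Y by (rule nondeg_fin_var_cong)
  moreover have "nondeg_fin_var M (g \<circ> Z) \<longleftrightarrow> nondeg_fin_var M (indicator B)"
    using g_Z by (rule nondeg_fin_var_cong)
  ultimately have "nondeg_fin_var M (g \<circ> Y)" "nondeg_fin_var M (g \<circ> Z)"
    using nondeg_fin_var_indicator events prob_sublevel u by simp_all
  moreover have "g \<in> borel_measurable borel" unfolding g_def by measurable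
  ultimately have "r = corr M (g \<circ> Y) (g \<circ> Z)"
    using invariant unfolding invariant_corr_def by simp
  also have "\<dots> = corr M (indicator A) (indicator B)"
    using g_Y g_Z by (rule corr_cong)
  also have "\<dots> = (prob (A \<inter> B) - u\<^sup>2) / (u * (1 - u))"
    using events prob_sublevel u by (intro corr_indicator_equal_prob) auto
  finally have "prob (A \<inter> B) = r * (u * (1 - u)) + u\<^sup>2"
    using u by (simp add: field_simps)
  moreover have "A \<inter> B = {\<omega> \<in> space M. F (Y \<omega>) \<le> u \<and> F (Z \<omega>) \<le> u}"
    unfolding A_def B_def by auto
  ultimately show ?thesis unfolding F_def marg_cdf_eq by simp
qed

lemma invariant_corr_lower_tail_dep: "lower_tail_dep_is M Y Z r"
proof -
  have "((\<lambda>u. r * (1 - u) + u) \<longlongrightarrow> r * (1 - 0) + 0) (at_right (0::real))"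
    by (intro tendsto_intros)
  then have "((\<lambda>u. r * (1 - u) + u) \<longlongrightarrow> r) (at_right (0::real))"
    by simp
  moreover have "eventually (\<lambda>u. r * (1 - u) + u =
      prob {\<omega> \<in> space M. marg_cdf M Y (Y \<omega>) \<le> u \<and> marg_cdf M Z (Z \<omega>) \<le> u} / u)
      (at_right (0::real))"
    unfolding eventually_at_right[OF zero_less_one]
    by (intro exI[of _ 1]) (auto simp: invariant_corr_joint_sublevel field_simps power2_eq_square)
  ultimately show ?thesis
    unfolding lower_tail_dep_is_def by (rule Lim_transform_eventually)
qed

lemma invariant_corr_kappa:
  assumes "admissible_unif g"
  shows "kappa g M Y Z = r"
proof -
  define F where "F = marg_cdf M Y"
  have [measurable]: "F \<in> borel_measurable borel" unfolding F_def by measurable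
  have [measurable]: "g \<in> borel_measurable borel"
    and g_uniform: "nondeg_fin_var (uniform_measure lborel {0..1}) g"
    using assms unfolding admissible_unif_def by blast+
  have "distr M borel (\<lambda>\<omega>. F (Y \<omega>)) = uniform_measure lborel {0..1}"
    "distr M borel (\<lambda>\<omega>. F (Z \<omega>)) = uniform_measure lborel {0..1}"
    unfolding F_def using distr_marg_cdf_uniform[OF Y continuous]
      distr_marg_cdf_uniform[OF Z] continuous by (simp_all add: marg_cdf_eq)
  then have "nondeg_fin_var M (g \<circ> F \<circ> Y)" "nondeg_fin_var M (g \<circ> F \<circ> Z)"
    using nondeg_fin_var_distr_iff[of "\<lambda>\<omega>. F (Y \<omega>)" M g]
      nondeg_fin_var_distr_iff[of "\<lambda>\<omega>. F (Z \<omega>)" M g] g_uniform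
    by (simp_all add: comp_def)
  moreover have "g \<circ> F \<in> borel_measurable borel" by measurable
  ultimately have "corr M (g \<circ> F \<circ> Y) (g \<circ> F \<circ> Z) = r"
    using invariant unfolding invariant_corr_def by blast
  then show ?thesis unfolding kappa_def marg_cdf_eq F_def by (simp add: comp_def)
qed

end

end

theorem proposition10:
  fixes M :: "'a measure" and d :: nat and X :: "nat \<Rightarrow> 'a \<Rightarrow> real"
  assumes "prob_space M"
    and rv: "\<And>i. i < d \<Longrightarrow> X i \<in> borel_measurable M"
    and continuous: "\<And>i x. i < d \<Longrightarrow> isCont (marg_cdf M (X i)) x"
    and identical: "\<And>i j. i < d \<Longrightarrow> j < d \<Longrightarrow> distr M borel (X i) = distr M borel (X j)"
    and "IC M d X"
  shows "(\<forall>i<d. \<forall>j<d. lower_tail_dep_is M (X i) (X j) (corr M (X i) (X j)))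
       \<and> (\<forall>g. admissible_unif g \<longrightarrow>
             (\<forall>i<d. \<forall>j<d. corr M (X i) (X j) = kappa g M (X i) (X j)))"
proof -
  obtain R where R: "\<And>i j. i < d \<Longrightarrow> j < d \<Longrightarrow> invariant_corr M (X i) (X j) (R i j)"
    using \<open>IC M d X\<close> unfolding IC_def by blast
  then have corr: "corr M (X i) (X j) = R i j" if "i < d" "j < d" for i j
    using that unfolding invariant_corr_def by blast
  note pair = rv rv identical continuous R
  show ?thesis
    using prob_space.invariant_corr_lower_tail_dep[OF \<open>prob_space M\<close> pair]
      prob_space.invariant_corr_kappa[OF \<open>prob_space M\<close> pair]
    by (simp add: corr)
qed

end
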